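(* Let $s,k$ be integers with $2\le s\le k$ and let $q$ be a prime power. If $q=2$, then \[b_q(k,s)\le \frac{s(k-s)+s+2}{\log_q\frac{q^s}{q^s-1}}+1.\] If $q\ge 3$, then \[b_q(k,s)\le (q^s-1)\cdot\frac{s(k-s)+s+2}{\log_q\left(\frac{q^4}{q^3-q+1}\right)}+1.\]
   Context: $\mathbb{F}_q^k$ is viewed as an affine space whose subspaces are the cosets (translates) of vector subspaces of $\mathbb{F}_q^k$; the codimension of an $i$-dimensional affine subspace is $k-i$. An (affine) $s$-blocking set in $\mathbb{F}_q^k$ is a set of points of $\mathbb{F}_q^k$ that contains at least one point of every affine subspace of dimension $k-s$. $b_q(k,s)$ denotes the smallest size of an $s$-blocking set in $\mathbb{F}_q^k$. *)

theory Defs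
  imports Complex_Main "HOL-Library.Cardinality"
begin

text \<open>Points of F^k, represented as functions nat => F vanishing outside {0..<k}.\<close>
definition points :: "nat \<Rightarrow> (nat \<Rightarrow> 'a::field) set" where
  "points k = {x. \<forall>i\<ge>k. x i = 0}"

definition lin_indep :: "nat \<Rightarrow> (nat \<Rightarrow> nat \<Rightarrow> 'a::field) \<Rightarrow> bool" where
  "lin_indep d v \<longleftrightarrow>
     (\<forall>c. (\<forall>i. (\<Sum>j<d. c j * v j i) = 0) \<longrightarrow> (\<forall>j<d. c j = 0))"

definition affine_subspace_dim :: "nat \<Rightarrow> nat \<Rightarrow> (nat \<Rightarrow> 'a::field) set \<Rightarrow> bool" where
  "affine_subspace_dim k d A \<longleftrightarrow>
     (\<exists>a \<in> points k. \<exists>v. (\<forall>j<d. v j \<in> points k) \<and> lin_indep d v \<and>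
        A = {(\<lambda>i. a i + (\<Sum>j<d. c j * v j i)) | c. True})"

definition blocking_set :: "nat \<Rightarrow> nat \<Rightarrow> (nat \<Rightarrow> 'a::field) set \<Rightarrow> bool" where
  "blocking_set k s B \<longleftrightarrow> B \<subseteq> points k \<and>
     (\<forall>A. affine_subspace_dim k (k - s) A \<longrightarrow> B \<inter> A \<noteq> {})"

text \<open>b_q(k,s) for the finite field 'a with q = CARD('a) elements.\<close>
definition bq :: "'a::{finite,field} itself \<Rightarrow> nat \<Rightarrow> nat \<Rightarrow> nat" where
  "bq _ k s = Min {card B | B :: (nat \<Rightarrow> 'a) set. blocking_set k s B}"

end

theory Submission
  imports Defs "HOL-Library.FuncSet"
begin

text \<open>Both bounds come from a greedy first-moment argument over the (k-s)-flats of F_q^k. Counting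
  pairs of a base point and an ordered basis shows that there are at most
  q^(s(k-s)+s) / prod_{j=1..k-s} (1 - q^-j) flats, and the product exceeds 1/4, and even
  q^2/(q^3-q+1) when q >= 3. A fixed flat misses a random point with probability 1 - q^-s,
  so some point lies on at least a fraction q^-s of the flats not yet blocked; adding such points
  one at a time gives the first bound, which in fact holds for every q. For the second bound one adds
  instead the subspace spanned by s random vectors, which costs only q^s - 1 new points besides 0.
  A flat a + V with a not in V misses it exactly when a stays outside V + span(u_1, ..., u_s);
  following how the codimension of V drops as the vectors are adjoined shows that this happens
  with probability at most (q^3-q+1)/q^4.\<close>

section \<open>Points and subspaces\<close>

lemma bij_betw_restrict_points:
  "bij_betw (\<lambda>x. restrict x {..<k}) (points k) (PiE {..<k} (\<lambda>_. UNIV :: 'a::field set))"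
proof (rule bij_betw_imageI)
  show "inj_on (\<lambda>x. restrict x {..<k}) (points k :: (nat \<Rightarrow> 'a) set)"
  proof (rule inj_onI, rule ext)
    fix x y i assume "x \<in> points k" "y \<in> points k" "restrict x {..<k} = restrict y {..<k}"
    then show "x i = y i"
      by (cases "i < k") (auto simp: points_def dest: fun_cong[where x = i])
  qed
  show "(\<lambda>x. restrict x {..<k}) ` points k = PiE {..<k} (\<lambda>_. UNIV :: 'a set)"
  proof (rule equalityI)
    show "PiE {..<k} (\<lambda>_. UNIV :: 'a set) \<subseteq> (\<lambda>x. restrict x {..<k}) ` points k"
    proof
      fix f :: "nat \<Rightarrow> 'a" assume f: "f \<in> PiE {..<k} (\<lambda>_. UNIV)"
      have "(\<lambda>i. if i < k then f i else 0) \<in> points k" by (simp add: points_def)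
      moreover have "f = restrict (\<lambda>i. if i < k then f i else 0) {..<k}"
        using f by (auto simp: PiE_def extensional_def)
      ultimately show "f \<in> (\<lambda>x. restrict x {..<k}) ` points k" by blast
    qed
  qed (rule image_subsetI, simp)
qed

lemma finite_points [simp]: "finite (points k :: (nat \<Rightarrow> 'a::{finite,field}) set)"
  using bij_betw_finite[OF bij_betw_restrict_points[of k, where 'a = 'a]] by (simp add: finite_PiE)

lemma card_points: "card (points k :: (nat \<Rightarrow> 'a::{finite,field}) set) = CARD('a) ^ k"
  using bij_betw_same_card[OF bij_betw_restrict_points[of k, where 'a = 'a]] by (simp add: card_PiE)

definition lin_subspace :: "(nat \<Rightarrow> 'a::field) set \<Rightarrow> bool" where
  "lin_subspace S \<longleftrightarrow> (\<lambda>_. 0) \<in> S \<and> (\<forall>x\<in>S. \<forall>y\<in>S. (\<lambda>i. x i + y i) \<in> S)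
     \<and> (\<forall>c. \<forall>x\<in>S. (\<lambda>i. c * x i) \<in> S)"

lemma lin_subspace_zero: "lin_subspace S \<Longrightarrow> (\<lambda>_. 0) \<in> S"
  unfolding lin_subspace_def by blast

lemma lin_subspace_add: "lin_subspace S \<Longrightarrow> x \<in> S \<Longrightarrow> y \<in> S \<Longrightarrow> (\<lambda>i. x i + y i) \<in> S"
  unfolding lin_subspace_def by blast

lemma lin_subspace_scale: "lin_subspace S \<Longrightarrow> x \<in> S \<Longrightarrow> (\<lambda>i. c * x i) \<in> S"
  unfolding lin_subspace_def by blast

lemma lin_subspace_neg: "lin_subspace S \<Longrightarrow> x \<in> S \<Longrightarrow> (\<lambda>i. - x i) \<in> S"
  using lin_subspace_scale[of S x "-1"] by simp

lemma lin_subspace_diff: "lin_subspace S \<Longrightarrow> x \<in> S \<Longrightarrow> y \<in> S \<Longrightarrow> (\<lambda>i. x i - y i) \<in> S"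
  using lin_subspace_add[of S x "\<lambda>i. - y i"] lin_subspace_neg[of S y] by simp

lemma lin_subspace_points: "lin_subspace (points k)"
  unfolding lin_subspace_def points_def by auto

definition adjoin :: "(nat \<Rightarrow> 'a::field) set \<Rightarrow> (nat \<Rightarrow> 'a) \<Rightarrow> (nat \<Rightarrow> 'a) set" where
  "adjoin S u = {(\<lambda>i. x i + c * u i) | x c. x \<in> S}"

fun adjoin_list :: "(nat \<Rightarrow> 'a::field) set \<Rightarrow> (nat \<Rightarrow> 'a) list \<Rightarrow> (nat \<Rightarrow> 'a) set" where
  "adjoin_list S [] = S"
| "adjoin_list S (u # us) = adjoin_list (adjoin S u) us"

lemma adjoinI: "x \<in> S \<Longrightarrow> (\<lambda>i. x i + c * u i) \<in> adjoin S u"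
  unfolding adjoin_def by blast

lemma adjoin_eq_image: "adjoin S u = (\<lambda>(x, c) i. x i + c * u i) ` (S \<times> UNIV)"
  unfolding adjoin_def by auto

lemma subset_adjoin: "S \<subseteq> adjoin S u"
proof
  fix x assume "x \<in> S"
  then have "(\<lambda>i. x i + 0 * u i) \<in> adjoin S u" by (rule adjoinI)
  then show "x \<in> adjoin S u" by simp
qed

lemma adjoin_mono: "S \<subseteq> R \<Longrightarrow> adjoin S u \<subseteq> adjoin R u"
  unfolding adjoin_def by blast

lemma adjoin_subset_points: "S \<subseteq> points k \<Longrightarrow> u \<in> points k \<Longrightarrow> adjoin S u \<subseteq> points k"
  unfolding adjoin_def points_def by auto

lemma lin_subspace_adjoin:
  assumes S: "lin_subspace S"
  shows "lin_subspace (adjoin S u)"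
  unfolding lin_subspace_def
proof (intro conjI ballI allI)
  show "(\<lambda>_. 0) \<in> adjoin S u"
    using lin_subspace_zero[OF S] subset_adjoin by blast
next
  fix x y assume "x \<in> adjoin S u" "y \<in> adjoin S u"
  then obtain x0 c y0 d where "x0 \<in> S" "y0 \<in> S"
    and xy: "x = (\<lambda>i. x0 i + c * u i)" "y = (\<lambda>i. y0 i + d * u i)"
    unfolding adjoin_def by blast
  then have "(\<lambda>i. (x0 i + y0 i) + (c + d) * u i) \<in> adjoin S u"
    by (intro adjoinI lin_subspace_add[OF S])
  then show "(\<lambda>i. x i + y i) \<in> adjoin S u"
    unfolding xy by (simp add: algebra_simps)
next
  fix c x assume "x \<in> adjoin S u"
  then obtain x0 d where "x0 \<in> S" and x: "x = (\<lambda>i. x0 i + d * u i)"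
    unfolding adjoin_def by blast
  then have "(\<lambda>i. c * x0 i + (c * d) * u i) \<in> adjoin S u"
    by (intro adjoinI lin_subspace_scale[OF S])
  then show "(\<lambda>i. c * x i) \<in> adjoin S u"
    unfolding x by (simp add: algebra_simps)
qed

lemma adjoin_eq_self:
  assumes "lin_subspace S" "u \<in> S"
  shows "adjoin S u = S"
proof
  show "adjoin S u \<subseteq> S"
    using assms by (auto simp: adjoin_def intro: lin_subspace_add lin_subspace_scale)
qed (rule subset_adjoin)

lemma adjoin_exchange:
  assumes S: "lin_subspace S" and "v \<in> adjoin S u" "v \<notin> S"
  shows "u \<in> adjoin S v"
proof -
  obtain x c where x: "x \<in> S" and v: "v = (\<lambda>i. x i + c * u i)"
    using assms(2) unfolding adjoin_def by blast
  have "c \<noteq> 0" using x v assms(3) by auto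
  then have "u = (\<lambda>i. (- inverse c) * x i + inverse c * v i)"
    unfolding v by (simp add: fun_eq_iff field_simps)
  moreover have "(\<lambda>i. (- inverse c) * x i + inverse c * v i) \<in> adjoin S v"
    by (intro adjoinI lin_subspace_scale[OF S x])
  ultimately show ?thesis by simp
qed

lemma finite_adjoin: "finite S \<Longrightarrow> finite (adjoin S (u :: nat \<Rightarrow> 'a::{finite,field}))"
  unfolding adjoin_eq_image by simp

lemma card_adjoin_le:
  "finite S \<Longrightarrow> card (adjoin S (u :: nat \<Rightarrow> 'a::{finite,field})) \<le> card S * CARD('a)"
  unfolding adjoin_eq_image
  by (rule order_trans[OF card_image_le]) (simp_all add: card_cartesian_product)

lemma card_adjoin:
  assumes S: "lin_subspace S" "finite S" and u: "u \<notin> S"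
  shows "card (adjoin S (u :: nat \<Rightarrow> 'a::{finite,field})) = CARD('a) * card S"
proof -
  have "inj_on (\<lambda>(x, c) i. x i + c * u i) (S \<times> (UNIV :: 'a set))"
  proof (rule inj_onI, clarify)
    fix x c y d assume xy: "x \<in> S" "y \<in> S"
      and eq: "(\<lambda>i. x i + c * u i) = (\<lambda>i. y i + d * u i)"
    have eq_i: "y i - x i = (c - d) * u i" for i
      using fun_cong[OF eq, of i] by (simp add: algebra_simps)
    have "c = d"
    proof (rule ccontr)
      assume "c \<noteq> d"
      then have "u = (\<lambda>i. inverse (c - d) * (y i - x i))"
        by (simp add: eq_i flip: mult.assoc)
      moreover have "(\<lambda>i. inverse (c - d) * (y i - x i)) \<in> S"
        by (intro lin_subspace_scale lin_subspace_diff S xy)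
      ultimately show False using u by simp
    qed
    then show "x = y \<and> c = d" using eq_i by auto
  qed
  then show ?thesis
    unfolding adjoin_eq_image by (simp add: card_image card_cartesian_product)
qed

lemma subset_adjoin_list: "S \<subseteq> adjoin_list S us"
proof (induction us arbitrary: S)
  case (Cons u us)
  then show ?case using subset_adjoin[of S u] by auto
qed simp

lemma adjoin_list_subset_points:
  "S \<subseteq> points k \<Longrightarrow> set us \<subseteq> points k \<Longrightarrow> adjoin_list S us \<subseteq> points k"
  by (induction us arbitrary: S) (auto simp: adjoin_subset_points)

lemma finite_adjoin_list:
  "finite S \<Longrightarrow> finite (adjoin_list S (us :: (nat \<Rightarrow> 'a::{finite,field}) list))"
  by (induction us arbitrary: S) (auto intro: finite_adjoin)

lemma card_adjoin_list_le:
  "finite S \<Longrightarrow>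
   card (adjoin_list S (us :: (nat \<Rightarrow> 'a::{finite,field}) list)) \<le> card S * CARD('a) ^ length us"
proof (induction us arbitrary: S)
  case (Cons u us)
  have "card (adjoin_list (adjoin S u) us) \<le> card (adjoin S u) * CARD('a) ^ length us"
    using Cons finite_adjoin by blast
  also have "\<dots> \<le> card S * CARD('a) * CARD('a) ^ length us"
    using card_adjoin_le[OF Cons.prems] by simp
  finally show ?case by simp
qed simp

lemma add_mem_adjoin_list:
  "t \<in> adjoin_list R us \<Longrightarrow> w \<in> R' \<Longrightarrow> lin_subspace R' \<Longrightarrow> R \<subseteq> R'
   \<Longrightarrow> (\<lambda>i. w i + t i) \<in> adjoin_list R' us"
proof (induction us arbitrary: R R')
  case Nil
  then show ?case by (auto intro: lin_subspace_add)
next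
  case (Cons u us)
  have "w \<in> adjoin R' u" "lin_subspace (adjoin R' u)" "adjoin R u \<subseteq> adjoin R' u"
    using Cons.prems subset_adjoin lin_subspace_adjoin adjoin_mono by blast+
  then show ?case
    using Cons.IH[of "adjoin R u" "adjoin R' u"] Cons.prems(1) by simp
qed

lemma adjoin_list_decompose:
  "z \<in> adjoin_list S us \<Longrightarrow> \<exists>x\<in>S. \<exists>t\<in>adjoin_list {\<lambda>_. 0} us. z = (\<lambda>i. x i + t i)"
proof (induction us arbitrary: S z)
  case Nil
  then show ?case by force
next
  case (Cons u us)
  obtain y t where "y \<in> adjoin S u" and t: "t \<in> adjoin_list {\<lambda>_. 0} us"
    and z: "z = (\<lambda>i. y i + t i)"
    using Cons.IH[of z "adjoin S u"] Cons.prems by auto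
  then obtain x c where x: "x \<in> S" and y: "y = (\<lambda>i. x i + c * u i)"
    unfolding adjoin_def by blast
  have "lin_subspace (adjoin {\<lambda>_. 0} u)"
    by (rule lin_subspace_adjoin) (simp add: lin_subspace_def)
  then have "(\<lambda>i. c * u i + t i) \<in> adjoin_list {\<lambda>_. 0} (u # us)"
    using add_mem_adjoin_list[OF t adjoinI[of "\<lambda>_. 0" "{\<lambda>_. 0}" c u] _ subset_adjoin] by simp
  moreover have "z = (\<lambda>i. x i + (c * u i + t i))"
    unfolding z y by (simp add: add.assoc)
  ultimately show ?case
    using x by (intro bexI[of _ x] bexI[of _ "\<lambda>i. c * u i + t i"]) auto
qed

section \<open>Avoiding a point by random vectors\<close>

text \<open>The probability that a point outside a subspace of codimension e of F_q^k is still outside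
  after adjoining n uniformly random vectors: a vector of the subspace changes nothing, one of
  the subspace enlarged by the point captures it, and any other lowers the codimension by one.\<close>
fun miss_prob :: "real \<Rightarrow> nat \<Rightarrow> nat \<Rightarrow> real" where
  "miss_prob q 0 n = 0"
| "miss_prob q (Suc e) 0 = 1"
| "miss_prob q (Suc e) (Suc n) =
     miss_prob q (Suc e) n / q ^ Suc e + (1 - 1 / q ^ e) * miss_prob q e n"

lemma miss_prob_le_mult_Suc:
  assumes q: "q \<ge> 1"
  shows "miss_prob q e n \<le> q * miss_prob q e (Suc n)"
proof (induction n arbitrary: e)
  case 0
  show ?case
  proof (cases e)
    case (Suc e')
    have x: "0 \<le> 1 / q ^ e'" "1 / q ^ e' \<le> 1" using q by auto
    have "q * miss_prob q e 1 = 1 / q ^ e' + q * (1 - 1 / q ^ e')"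
      using Suc q by (cases e') (simp_all add: algebra_simps)
    also have "\<dots> \<ge> 1 / q ^ e' + 1 * (1 - 1 / q ^ e')"
      using x q by (intro add_left_mono mult_right_mono) auto
    finally show ?thesis using Suc by simp
  qed simp
next
  case (Suc n)
  show ?case
  proof (cases e)
    case (Suc e')
    have "miss_prob q e n / q ^ e \<le> q * miss_prob q e (Suc n) / q ^ e"
      using Suc.IH[of e] q by (simp add: divide_right_mono)
    moreover have "(1 - 1 / q ^ e') * miss_prob q e' n \<le> (1 - 1 / q ^ e') * (q * miss_prob q e' (Suc n))"
      using Suc.IH[of e'] q by (intro mult_left_mono) auto
    ultimately show ?thesis using Suc by (simp add: algebra_simps)
  qed simp
qed

lemma miss_prob_Suc_Suc_le:
  assumes q: "q \<ge> 1" and e: "e \<ge> 1"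
  shows "miss_prob q (Suc e) (Suc n) \<le> miss_prob q e n"
  using e
proof (induction n arbitrary: e)
  case 0
  then obtain e' where e: "e = Suc e'" by (cases e) auto
  have "1 / q ^ Suc e \<le> 1 / q ^ e" using q by (simp add: field_simps)
  then show ?case using e by simp
next
  case (Suc n)
  have "miss_prob q (Suc e) (Suc n) / q ^ Suc e \<le> miss_prob q e n / q ^ Suc e"
    using Suc q by (simp add: divide_right_mono)
  also have "\<dots> \<le> q * miss_prob q e (Suc n) / q ^ Suc e"
    by (rule divide_right_mono[OF miss_prob_le_mult_Suc[OF q]]) (use q in simp)
  also have "\<dots> = miss_prob q e (Suc n) / q ^ e"
    using q by simp
  finally have "miss_prob q (Suc e) (Suc (Suc n))
      \<le> miss_prob q e (Suc n) / q ^ e + (1 - 1 / q ^ e) * miss_prob q e (Suc n)"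
    by simp
  also have "\<dots> = miss_prob q e (Suc n)"
    by (simp add: algebra_simps)
  finally show ?case .
qed

lemma miss_prob_diag_le:
  assumes "q \<ge> 1" "s \<ge> 2"
  shows "miss_prob q s s \<le> (q ^ 3 - q + 1) / q ^ 4"
  using assms(2)
proof (induction s rule: nat_induct_at_least)
  case base
  show ?case using assms(1) by (simp add: eval_nat_numeral field_simps)
next
  case (Suc s)
  then show ?case using miss_prob_Suc_Suc_le[OF assms(1), of s s] by simp
qed

definition point_lists :: "nat \<Rightarrow> nat \<Rightarrow> (nat \<Rightarrow> 'a::field) list set" where
  "point_lists k n = {us. set us \<subseteq> points k \<and> length us = n}"

lemma finite_point_lists: "finite (point_lists k n :: (nat \<Rightarrow> 'a::{finite,field}) list set)"
  unfolding point_lists_def by (rule finite_lists_length_eq) simp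

lemma card_point_lists:
  "card (point_lists k n :: (nat \<Rightarrow> 'a::{finite,field}) list set) = (CARD('a) ^ k) ^ n"
  unfolding point_lists_def by (simp add: card_lists_length_eq card_points)

lemma card_point_lists_Suc_filter:
  fixes P :: "(nat \<Rightarrow> 'a::{finite,field}) list \<Rightarrow> bool"
  shows "card {us \<in> point_lists k (Suc n). P us}
           = (\<Sum>u\<in>points k. card {us \<in> point_lists k n. P (u # us)})"
proof -
  have "{us \<in> point_lists k (Suc n). P us}
          = (\<lambda>(u, us). u # us) ` Sigma (points k) (\<lambda>u. {us \<in> point_lists k n. P (u # us)})"
    by (auto simp: point_lists_def length_Suc_conv)
  moreover have "inj_on (\<lambda>(u, us). u # us) (Sigma (points k) (\<lambda>u. {us \<in> point_lists k n. P (u # us)}))"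
    by (auto intro: inj_onI)
  moreover have "finite {us \<in> point_lists k n. P (u # us)}" for u
    by (rule finite_subset[OF _ finite_point_lists]) auto
  ultimately show ?thesis by (simp add: card_image card_SigmaI)
qed

lemma codim_pos:
  fixes S :: "(nat \<Rightarrow> 'a::{finite,field}) set"
  assumes "S \<subseteq> points k" "a \<in> points k" "a \<notin> S" "card S * CARD('a) ^ e = CARD('a) ^ k"
  shows "e \<noteq> 0"
proof
  assume "e = 0"
  then have "card S = card (points k :: (nat \<Rightarrow> 'a) set)"
    using assms(4) by (simp add: card_points)
  then have "S = points k" using card_subset_eq[OF finite_points assms(1)] by simp
  then show False using assms(2,3) by simp
qed

lemma miss_prob_Suc_Suc_scaled:
  fixes q c N :: real
  assumes "q > 0" and "c * q ^ Suc e = N"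
  shows "c * (miss_prob q (Suc e) n * N ^ n) + (N - q * c) * (miss_prob q e n * N ^ n)
           = miss_prob q (Suc e) (Suc n) * N ^ Suc n"
proof -
  have c: "c = N / q ^ Suc e" using assms by (simp add: field_simps)
  show ?thesis unfolding c using assms(1) by (simp add: field_simps)
qed

lemma sum_points_le_by_adjoin:
  fixes S :: "(nat \<Rightarrow> 'a::{finite,field}) set" and f :: "(nat \<Rightarrow> 'a) \<Rightarrow> real"
    and \<alpha> \<beta> :: real
  assumes S: "lin_subspace S" "S \<subseteq> points k" "a \<in> points k" "a \<notin> S"
    and in_S: "\<And>u. u \<in> S \<Longrightarrow> f u \<le> \<alpha>"
    and in_adjoin: "\<And>u. u \<in> adjoin S a - S \<Longrightarrow> f u = 0"
    and outside: "\<And>u. u \<in> points k - adjoin S a \<Longrightarrow> f u \<le> \<beta>"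
  shows "(\<Sum>u\<in>points k. f u)
           \<le> real (card S) * \<alpha> + (real (CARD('a) ^ k) - real CARD('a) * real (card S)) * \<beta>"
proof -
  let ?Sa = "adjoin S a"
  have SSa: "S \<subseteq> ?Sa" by (rule subset_adjoin)
  have Sa: "?Sa \<subseteq> points k" by (rule adjoin_subset_points[OF S(2,3)])
  have "card ?Sa = CARD('a) * card S"
    using S by (intro card_adjoin) (auto intro: finite_subset)
  moreover have "card ?Sa \<le> CARD('a) ^ k"
    using card_mono[OF finite_points Sa] by (simp add: card_points)
  ultimately have card_out:
    "real (card (points k - ?Sa)) = real (CARD('a) ^ k) - real CARD('a) * real (card S)"
    by (simp add: card_Diff_subset[OF finite_subset[OF Sa] Sa] card_points of_nat_diff)
  have "(\<Sum>u\<in>points k. f u) = (\<Sum>u\<in>points k - ?Sa. f u) + (\<Sum>u\<in>?Sa - S. f u) + (\<Sum>u\<in>S. f u)"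
    by (simp add: sum.subset_diff[OF Sa finite_points] sum.subset_diff[OF SSa finite_subset[OF Sa]])
  also have "\<dots> \<le> (\<Sum>u\<in>points k - ?Sa. \<beta>) + 0 + (\<Sum>u\<in>S. \<alpha>)"
    using in_S in_adjoin outside by (intro add_mono sum_mono) auto
  finally show ?thesis
    using card_out by (simp add: add.commute)
qed

lemma card_avoiding_lists_le:
  fixes S :: "(nat \<Rightarrow> 'a::{finite,field}) set"
  assumes "lin_subspace S" "S \<subseteq> points k" "a \<in> points k" "a \<notin> S"
    and "card S * CARD('a) ^ e = CARD('a) ^ k"
  shows "real (card {us \<in> point_lists k n. a \<notin> adjoin_list S us})
           \<le> miss_prob (real CARD('a)) e n * real (CARD('a) ^ k) ^ n"
  using assms
proof (induction n arbitrary: S e)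
  case 0
  obtain e' where "e = Suc e'" using codim_pos[OF "0.prems"(2-5)] not0_implies_Suc by blast
  have "{us \<in> point_lists k 0. a \<notin> adjoin_list S us} \<subseteq> {[]}"
    by (auto simp: point_lists_def)
  from card_mono[OF _ this] have "card {us \<in> point_lists k 0. a \<notin> adjoin_list S us} \<le> 1"
    by simp
  then show ?case using \<open>e = Suc e'\<close> by simp
next
  case (Suc n)
  note S = Suc.prems
  let ?q = "real CARD('a)" and ?N = "real (CARD('a) ^ k)"
  let ?f = "\<lambda>u. real (card {us \<in> point_lists k n. a \<notin> adjoin_list (adjoin S u) us})"
  obtain e' where e: "e = Suc e'" using codim_pos[OF S(2-5)] not0_implies_Suc by blast
  have "real (card {us \<in> point_lists k (Suc n). a \<notin> adjoin_list S us}) = (\<Sum>u\<in>points k. ?f u)"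
    by (simp add: card_point_lists_Suc_filter)
  also have "\<dots> \<le> card S * (miss_prob ?q e n * ?N ^ n) + (?N - ?q * card S) * (miss_prob ?q e' n * ?N ^ n)"
  proof (rule sum_points_le_by_adjoin[OF S(1-4)])
    fix u assume "u \<in> S"
    then show "?f u \<le> miss_prob ?q e n * ?N ^ n"
      using Suc.IH[OF S] adjoin_eq_self[OF S(1)] by simp
  next
    fix u assume "u \<in> adjoin S a - S"
    then have "a \<in> adjoin S u" using adjoin_exchange[OF S(1), of u a] by blast
    then have "a \<in> adjoin_list (adjoin S u) us" for us
      using subset_adjoin_list by blast
    then show "?f u = 0" by simp
  next
    fix u assume u: "u \<in> points k - adjoin S a"
    then have "u \<notin> S" using subset_adjoin[of S a] by blast
    have "a \<notin> adjoin S u"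
      using u adjoin_exchange[OF S(1) _ S(4)] by blast
    moreover have "card (adjoin S u) * CARD('a) ^ e' = CARD('a) ^ k"
      using card_adjoin[OF S(1) _ \<open>u \<notin> S\<close>] finite_subset[OF S(2)] S(5) e
      by (simp add: algebra_simps)
    ultimately show "?f u \<le> miss_prob ?q e' n * ?N ^ n"
      using Suc.IH[OF lin_subspace_adjoin[OF S(1)] adjoin_subset_points[OF S(2)] S(3)] u
      by simp
  qed
  also have "\<dots> = miss_prob ?q e (Suc n) * ?N ^ Suc n"
    unfolding e
  proof (rule miss_prob_Suc_Suc_scaled)
    show "real (card S) * ?q ^ Suc e' = ?N"
      using S(5) e by (metis of_nat_mult of_nat_power)
  qed simp
  finally show ?case .
qed

section \<open>Spans and independent families\<close>

definition lin_span :: "nat \<Rightarrow> (nat \<Rightarrow> nat \<Rightarrow> 'a::field) \<Rightarrow> (nat \<Rightarrow> 'a) set" where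
  "lin_span d v = {(\<lambda>i. \<Sum>j<d. c j * v j i) | c. True}"

lemma lin_spanI: "(\<lambda>i. \<Sum>j<d. c j * v j i) \<in> lin_span d v"
  unfolding lin_span_def by blast

lemma lin_comb_cong:
  "(\<And>j. j < d \<Longrightarrow> v j = w j) \<Longrightarrow> (\<Sum>j<d. c j * v j i) = (\<Sum>j<d. c j * w j i)"
  by (rule sum.cong) auto

lemma lin_span_cong: "(\<And>j. j < d \<Longrightarrow> v j = w j) \<Longrightarrow> lin_span d v = lin_span d w"
  unfolding lin_span_def using lin_comb_cong[of d v w] by presburger

lemma lin_indep_cong: "(\<And>j. j < d \<Longrightarrow> v j = w j) \<Longrightarrow> lin_indep d v = lin_indep d w"
  unfolding lin_indep_def using lin_comb_cong[of d v w] by presburger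

lemma lin_span_eq_image: "lin_span d v = (\<lambda>c i. \<Sum>j<d. c j * v j i) ` points d"
proof (intro equalityI subsetI)
  fix x assume "x \<in> lin_span d v"
  then obtain c where x: "x = (\<lambda>i. \<Sum>j<d. c j * v j i)" unfolding lin_span_def by blast
  have "(\<lambda>j. if j < d then c j else 0) \<in> points d" by (simp add: points_def)
  then show "x \<in> (\<lambda>c i. \<Sum>j<d. c j * v j i) ` points d"
    by (rule rev_image_eqI) (simp add: x)
qed (auto simp: lin_span_def)

lemma inj_on_lin_comb:
  assumes "lin_indep d v"
  shows "inj_on (\<lambda>c i. \<Sum>j<d. c j * v j i) (points d)"
proof (rule inj_onI, rule ext)
  fix c c' j assume cc: "c \<in> points d" "c' \<in> points d"
    and eq: "(\<lambda>i. \<Sum>j<d. c j * v j i) = (\<lambda>i. \<Sum>j<d. c' j * v j i)"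
  have "\<forall>i. (\<Sum>j<d. (c j - c' j) * v j i) = 0"
    using eq by (simp add: fun_eq_iff algebra_simps sum_subtractf)
  then have "\<forall>j<d. c j - c' j = 0"
    using spec[OF assms[unfolded lin_indep_def], of "\<lambda>j. c j - c' j"] by blast
  then show "c j = c' j"
    using cc by (cases "j < d") (auto simp: points_def)
qed

lemma card_lin_span:
  "lin_indep d v \<Longrightarrow> card (lin_span d (v :: nat \<Rightarrow> nat \<Rightarrow> 'a::{finite,field})) = CARD('a) ^ d"
  unfolding lin_span_eq_image by (simp add: card_image inj_on_lin_comb card_points)

lemma finite_lin_span: "finite (lin_span d (v :: nat \<Rightarrow> nat \<Rightarrow> 'a::{finite,field}))"
  unfolding lin_span_eq_image by simp

lemma lin_span_subset:
  assumes S: "lin_subspace S" and v: "\<And>j. j < d \<Longrightarrow> v j \<in> S"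
  shows "lin_span d v \<subseteq> S"
proof -
  have "(\<lambda>i. \<Sum>j<n. c j * v j i) \<in> S" if "n \<le> d" for n c
    using that
  proof (induction n)
    case 0
    then show ?case using lin_subspace_zero[OF S] by simp
  next
    case (Suc n)
    then have "(\<lambda>i. (\<Sum>j<n. c j * v j i) + c n * v n i) \<in> S"
      by (intro lin_subspace_add[OF S] lin_subspace_scale[OF S] v) auto
    then show ?case by simp
  qed
  then show ?thesis unfolding lin_span_def by auto
qed

lemma lin_subspace_lin_span: "lin_subspace (lin_span d v)"
  unfolding lin_subspace_def
proof (intro conjI ballI allI)
  show "(\<lambda>_. 0) \<in> lin_span d v"
    using lin_spanI[where c = "\<lambda>_. 0"] by simp
next
  fix x y assume "x \<in> lin_span d v" "y \<in> lin_span d v"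
  then obtain c c' where "x = (\<lambda>i. \<Sum>j<d. c j * v j i)" "y = (\<lambda>i. \<Sum>j<d. c' j * v j i)"
    unfolding lin_span_def by blast
  then have "(\<lambda>i. x i + y i) = (\<lambda>i. \<Sum>j<d. (c j + c' j) * v j i)"
    by (simp add: algebra_simps sum.distrib)
  then show "(\<lambda>i. x i + y i) \<in> lin_span d v" by (simp add: lin_spanI)
next
  fix a x assume "x \<in> lin_span d v"
  then obtain c where "x = (\<lambda>i. \<Sum>j<d. c j * v j i)" unfolding lin_span_def by blast
  then have "(\<lambda>i. a * x i) = (\<lambda>i. \<Sum>j<d. (a * c j) * v j i)"
    by (simp add: algebra_simps sum_distrib_left)
  then show "(\<lambda>i. a * x i) \<in> lin_span d v" by (simp add: lin_spanI)
qed

lemma lin_indep_SucD: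
  assumes L: "lin_indep (Suc n) w"
  shows "lin_indep n w" "w n \<notin> lin_span n w"
proof -
  show "lin_indep n w" unfolding lin_indep_def
  proof (intro allI impI)
    fix c j assume "\<forall>i. (\<Sum>j<n. c j * w j i) = 0" "j < n"
    then have "\<forall>i. (\<Sum>j<Suc n. (c(n := 0)) j * w j i) = 0" "j < Suc n"
      by simp_all
    then have "(c(n := 0)) j = 0"
      using L unfolding lin_indep_def by blast
    with \<open>j < n\<close> show "c j = 0" by simp
  qed
  show "w n \<notin> lin_span n w"
  proof
    assume "w n \<in> lin_span n w"
    then obtain c where c: "w n = (\<lambda>i. \<Sum>j<n. c j * w j i)" unfolding lin_span_def by blast
    have "\<forall>i. (\<Sum>j<Suc n. (c(n := -1)) j * w j i) = 0"
      using fun_cong[OF c] by simp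
    then have "(c(n := -1)) n = 0"
      using L unfolding lin_indep_def by blast
    then show False by simp
  qed
qed

lemma lin_indep_SucI:
  assumes indep: "lin_indep n w" and new: "w n \<notin> lin_span n w"
  shows "lin_indep (Suc n) w"
  unfolding lin_indep_def
proof (intro allI impI)
  fix c j assume c: "\<forall>i. (\<Sum>j<Suc n. c j * w j i) = 0" and j: "j < Suc n"
  have cn: "c n = 0"
  proof (rule ccontr)
    assume "c n \<noteq> 0"
    have "c n * w n i = c n * (\<Sum>j<n. (- c j / c n) * w j i)" for i
    proof -
      have "c n * w n i = - (\<Sum>j<n. c j * w j i)"
        using c by (simp add: eq_neg_iff_add_eq_0 add.commute)
      moreover have "(\<Sum>j<n. (- c j / c n) * w j i) = - (\<Sum>j<n. c j * w j i) / c n"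
        by (simp add: sum_divide_distrib sum_negf)
      ultimately show ?thesis using \<open>c n \<noteq> 0\<close> by simp
    qed
    then have "w n = (\<lambda>i. \<Sum>j<n. (- c j / c n) * w j i)"
      using \<open>c n \<noteq> 0\<close> by (simp add: fun_eq_iff)
    then show False using new lin_spanI[where c = "\<lambda>j. - c j / c n"] by simp
  qed
  then have "\<forall>j<n. c j = 0" using c indep unfolding lin_indep_def by simp
  then show "c j = 0" using j cn less_Suc_eq by auto
qed

lemma lin_indep_Suc: "lin_indep (Suc n) w \<longleftrightarrow> lin_indep n w \<and> w n \<notin> lin_span n w"
  using lin_indep_SucD lin_indep_SucI by blast

text \<open>Normalising the families to vanish from index n on makes their set finite.\<close>
definition indep_families :: "(nat \<Rightarrow> 'a::field) set \<Rightarrow> nat \<Rightarrow> (nat \<Rightarrow> nat \<Rightarrow> 'a) set" where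
  "indep_families S n = {v. (\<forall>j<n. v j \<in> S) \<and> (\<forall>j\<ge>n. v j = (\<lambda>_. 0)) \<and> lin_indep n v}"

lemma indep_families_0: "indep_families S 0 = {\<lambda>_ _. 0}"
  unfolding indep_families_def lin_indep_def by auto

lemma indep_families_Suc:
  "indep_families S (Suc n)
     = (\<lambda>(v, u). v(n := u)) ` Sigma (indep_families S n) (\<lambda>v. S - lin_span n v)"
proof (intro equalityI subsetI)
  fix w assume w: "w \<in> indep_families S (Suc n)"
  define v where "v = w(n := (\<lambda>_. 0))"
  have vw: "lin_indep n v = lin_indep n w" "lin_span n v = lin_span n w"
    by (rule lin_indep_cong lin_span_cong, simp add: v_def)+
  have "lin_indep n w" "w n \<notin> lin_span n w"
    using w lin_indep_Suc unfolding indep_families_def by auto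
  then have "v \<in> indep_families S n" "w n \<in> S - lin_span n v"
    using w vw unfolding indep_families_def by (auto simp: v_def)
  moreover have "w = v(n := w n)" unfolding v_def by simp
  ultimately show "w \<in> (\<lambda>(v, u). v(n := u)) ` Sigma (indep_families S n) (\<lambda>v. S - lin_span n v)"
    by (intro image_eqI[where x = "(v, w n)"]) auto
next
  fix w assume "w \<in> (\<lambda>(v, u). v(n := u)) ` Sigma (indep_families S n) (\<lambda>v. S - lin_span n v)"
  then obtain v u where v: "v \<in> indep_families S n" and u: "u \<in> S - lin_span n v"
    and w: "w = v(n := u)"
    by auto
  have wv: "lin_indep n w = lin_indep n v" "lin_span n w = lin_span n v"
    by (rule lin_indep_cong lin_span_cong, simp add: w)+
  have "lin_indep (Suc n) w"
    using v u wv unfolding lin_indep_Suc indep_families_def by (simp add: w)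
  then show "w \<in> indep_families S (Suc n)"
    using v u unfolding indep_families_def w by (auto simp: less_Suc_eq)
qed

lemma inj_on_fun_upd_indep_families:
  "inj_on (\<lambda>(v, u). v(n := u)) (Sigma (indep_families S n) B)"
proof (rule inj_onI, clarify)
  fix v u v' u' assume "v \<in> indep_families S n" "v' \<in> indep_families S n"
    and eq: "v(n := u) = v'(n := u')"
  then have "v n = v' n" by (simp add: indep_families_def)
  then show "v = v' \<and> u = u'"
    using eq by (metis fun_upd_idem fun_upd_same fun_upd_upd)
qed

lemma finite_indep_families:
  "finite S \<Longrightarrow> finite (indep_families S n)"
  by (induction n) (simp_all add: indep_families_0 indep_families_Suc)

lemma card_indep_families:
  fixes S :: "(nat \<Rightarrow> 'a::{finite,field}) set"
  assumes S: "lin_subspace S" "finite S"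
  shows "card (indep_families S n) = (\<Prod>i<n. card S - CARD('a) ^ i)"
proof (induction n)
  case 0
  then show ?case by (simp add: indep_families_0)
next
  case (Suc n)
  have card_diff: "card (S - lin_span n v) = card S - CARD('a) ^ n"
    if "v \<in> indep_families S n" for v
  proof -
    have "lin_span n v \<subseteq> S"
      using that lin_span_subset[OF S(1)] unfolding indep_families_def by blast
    moreover have "card (lin_span n v) = CARD('a) ^ n"
      using that card_lin_span unfolding indep_families_def by blast
    ultimately show ?thesis by (simp add: card_Diff_subset finite_lin_span)
  qed
  have "card (indep_families S (Suc n))
          = card (Sigma (indep_families S n) (\<lambda>v. S - lin_span n v))"
    unfolding indep_families_Suc by (rule card_image[OF inj_on_fun_upd_indep_families])
  also have "\<dots> = (\<Sum>v\<in>indep_families S n. card (S - lin_span n v))"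
    using S(2) finite_indep_families by (intro card_SigmaI) auto
  also have "\<dots> = card (indep_families S n) * (card S - CARD('a) ^ n)"
    using card_diff by simp
  finally show ?case using Suc by simp
qed

section \<open>Counting flats\<close>

definition transl :: "(nat \<Rightarrow> 'a::field) \<Rightarrow> (nat \<Rightarrow> 'a) \<Rightarrow> nat \<Rightarrow> 'a" where
  "transl a x = (\<lambda>i. a i + x i)"

lemma inj_transl: "inj (transl a)"
  by (rule injI) (simp add: transl_def fun_eq_iff)

lemma transl_image_subset_points:
  "a \<in> points k \<Longrightarrow> V \<subseteq> points k \<Longrightarrow> transl a ` V \<subseteq> points k"
  unfolding transl_def points_def by auto

lemma transl_transl_image:
  assumes V: "lin_subspace V" and x: "x \<in> V"
  shows "transl (transl a x) ` V = transl a ` V"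
proof (intro equalityI image_subsetI)
  fix y assume "y \<in> V"
  then have "transl x y \<in> V"
    unfolding transl_def by (rule lin_subspace_add[OF V x])
  moreover have "transl (transl a x) y = transl a (transl x y)"
    by (simp add: transl_def fun_eq_iff add.assoc)
  ultimately show "transl (transl a x) y \<in> transl a ` V" by simp
next
  fix y assume "y \<in> V"
  then have "(\<lambda>i. y i - x i) \<in> V" by (rule lin_subspace_diff[OF V _ x])
  moreover have "transl a y = transl (transl a x) (\<lambda>i. y i - x i)"
    by (simp add: transl_def fun_eq_iff)
  ultimately show "transl a y \<in> transl (transl a x) ` V" by simp
qed

definition flats :: "nat \<Rightarrow> nat \<Rightarrow> (nat \<Rightarrow> 'a::field) set set" where
  "flats k d = {A. affine_subspace_dim k d A}"

definition frames :: "nat \<Rightarrow> nat \<Rightarrow> ((nat \<Rightarrow> 'a::field) \<times> (nat \<Rightarrow> nat \<Rightarrow> 'a)) set" where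
  "frames k d = points k \<times> indep_families (points k) d"

definition flat :: "nat \<Rightarrow> (nat \<Rightarrow> 'a::field) \<times> (nat \<Rightarrow> nat \<Rightarrow> 'a) \<Rightarrow> (nat \<Rightarrow> 'a) set" where
  "flat d p = transl (fst p) ` lin_span d (snd p)"

lemma flat_eq_Collect: "flat d (a, v) = {(\<lambda>i. a i + (\<Sum>j<d. c j * v j i)) | c. True}"
  unfolding flat_def lin_span_def transl_def by auto

lemma flats_eq_image: "flats k d = flat d ` frames k d"
proof (intro equalityI subsetI)
  fix A assume "A \<in> flats k d"
  then obtain a v where a: "a \<in> points k" and v: "\<forall>j<d. v j \<in> points k" "lin_indep d v"
    and A: "A = {(\<lambda>i. a i + (\<Sum>j<d. c j * v j i)) | c. True}"
    unfolding flats_def affine_subspace_dim_def by blast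
  define v' where "v' = (\<lambda>j. if j < d then v j else (\<lambda>_. 0))"
  have v'v: "lin_indep d v' = lin_indep d v" "lin_span d v' = lin_span d v"
    by (rule lin_indep_cong lin_span_cong, simp add: v'_def)+
  have "A = flat d (a, v)"
    by (simp add: A flat_eq_Collect)
  also have "\<dots> = flat d (a, v')"
    by (simp add: flat_def v'v)
  finally have "A = flat d (a, v')" .
  moreover have "(a, v') \<in> frames k d"
    using a v v'v unfolding frames_def indep_families_def by (auto simp: v'_def)
  ultimately show "A \<in> flat d ` frames k d" by blast
next
  fix A assume "A \<in> flat d ` frames k d"
  then obtain a v where "a \<in> points k" "v \<in> indep_families (points k) d" "A = flat d (a, v)"
    unfolding frames_def by auto
  then show "A \<in> flats k d"
    unfolding flats_def affine_subspace_dim_def flat_eq_Collect indep_families_def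
    by auto
qed

lemma flats_obtain_frame:
  assumes "A \<in> flats k d"
  obtains a v where "(a, v) \<in> frames k d" "A = flat d (a, v)"
  using assms unfolding flats_eq_image by auto

lemma finite_frames: "finite (frames k d :: ((nat \<Rightarrow> 'a::{finite,field}) \<times> _) set)"
  unfolding frames_def by (simp add: finite_indep_families)

lemma card_frames:
  "card (frames k d :: ((nat \<Rightarrow> 'a::{finite,field}) \<times> _) set)
     = CARD('a) ^ k * (\<Prod>i<d. CARD('a) ^ k - CARD('a) ^ i)"
  unfolding frames_def
  by (simp add: card_cartesian_product card_indep_families lin_subspace_points card_points)

lemma finite_flats: "finite (flats k d :: (nat \<Rightarrow> 'a::{finite,field}) set set)"
  unfolding flats_eq_image by (simp add: finite_frames)

lemma frame_spans:
  fixes a :: "nat \<Rightarrow> 'a::{finite,field}"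
  assumes "(a, v) \<in> frames k d"
  shows "lin_span d v \<subseteq> points k" "card (lin_span d v) = CARD('a) ^ d"
    "flat d (a, v) \<subseteq> points k" "card (flat d (a, v)) = CARD('a) ^ d"
proof -
  have a: "a \<in> points k" and v: "\<forall>j<d. v j \<in> points k" "lin_indep d v"
    using assms unfolding frames_def indep_families_def by auto
  show span: "lin_span d v \<subseteq> points k"
    using v(1) by (simp add: lin_span_subset lin_subspace_points)
  show card_span: "card (lin_span d v) = CARD('a) ^ d"
    using v(2) by (rule card_lin_span)
  show "flat d (a, v) \<subseteq> points k"
    unfolding flat_def using transl_image_subset_points[OF a span] by simp
  show "card (flat d (a, v)) = CARD('a) ^ d"
    unfolding flat_def using card_span by (simp add: card_image inj_on_subset[OF inj_transl])
qed

lemma frames_of_flat: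
  fixes a :: "nat \<Rightarrow> 'a::{finite,field}"
  assumes av: "(a, v) \<in> frames k d"
  shows "flat d (a, v) \<times> indep_families (lin_span d v) d
           \<subseteq> {p \<in> frames k d. flat d p = flat d (a, v)}"
proof clarify
  fix a' w assume a': "a' \<in> flat d (a, v)" and w: "w \<in> indep_families (lin_span d v) d"
  note spans = frame_spans[OF av]
  have w_span: "\<forall>j<d. w j \<in> lin_span d v" and w_indep: "lin_indep d w"
    using w unfolding indep_families_def by auto
  have "lin_span d w \<subseteq> lin_span d v"
    using w_span by (simp add: lin_span_subset lin_subspace_lin_span)
  moreover have "card (lin_span d w) = card (lin_span d v)"
    using card_lin_span[OF w_indep] spans(2) by simp
  ultimately have span_eq: "lin_span d w = lin_span d v"
    by (simp add: card_subset_eq finite_lin_span)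
  obtain x where x: "x \<in> lin_span d v" "a' = transl a x"
    using a' unfolding flat_def by auto
  have "flat d (a', w) = flat d (a, v)"
    by (simp add: flat_def span_eq x(2) transl_transl_image[OF lin_subspace_lin_span x(1)])
  moreover have "(a', w) \<in> frames k d"
    using a' spans w unfolding frames_def indep_families_def by auto
  ultimately show "(a', w) \<in> frames k d \<and> flat d (a', w) = flat d (a, v)" by simp
qed

lemma card_flats_mult_le:
  "card (flats k d :: (nat \<Rightarrow> 'a::{finite,field}) set set)
     * (CARD('a) ^ d * (\<Prod>i<d. CARD('a) ^ d - CARD('a) ^ i))
   \<le> CARD('a) ^ k * (\<Prod>i<d. CARD('a) ^ k - CARD('a) ^ i)"
proof -
  let ?P = "frames k d :: ((nat \<Rightarrow> 'a) \<times> _) set" and ?F = "flats k d :: (nat \<Rightarrow> 'a) set set"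
  let ?m = "CARD('a) ^ d * (\<Prod>i<d. CARD('a) ^ d - CARD('a) ^ i)"
  have "card ?P = (\<Sum>A\<in>?F. card {p \<in> ?P. flat d p = A})"
    unfolding flats_eq_image using finite_frames
    by (subst card_UN_disjoint[symmetric]) (auto intro!: arg_cong[where f = card])
  also have "\<dots> \<ge> (\<Sum>A\<in>?F. ?m)"
  proof (rule sum_mono)
    fix A assume "A \<in> ?F"
    then obtain a v where av: "(a, v) \<in> ?P" and A: "A = flat d (a, v)"
      unfolding flats_eq_image by auto
    have "?m = card (flat d (a, v) \<times> indep_families (lin_span d v) d)"
      using frame_spans[OF av]
      by (simp add: card_cartesian_product card_indep_families lin_subspace_lin_span finite_lin_span)
    also have "\<dots> \<le> card {p \<in> ?P. flat d p = A}"
      unfolding A by (rule card_mono[OF finite_subset[OF _ finite_frames] frames_of_flat[OF av]]) auto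
    finally show "?m \<le> card {p \<in> ?P. flat d p = A}" .
  qed
  finally show ?thesis by (simp add: card_frames)
qed

definition euler_partial :: "real \<Rightarrow> nat \<Rightarrow> real" where
  "euler_partial x d = (\<Prod>j<d. 1 - x ^ Suc j)"

lemma prod_pow_diff_eq_euler_partial:
  fixes q :: real
  assumes "q > 0"
  shows "(\<Prod>i<d. q ^ d - q ^ i) = q ^ (d * d) * euler_partial (1 / q) d"
proof -
  have "(\<Prod>i<d. q ^ d - q ^ i) = (\<Prod>i<d. q ^ d - q ^ (d - Suc i))"
    by (rule prod.nat_diff_reindex[symmetric])
  also have "\<dots> = (\<Prod>i<d. q ^ d * (1 - (1 / q) ^ Suc i))"
  proof (rule prod.cong)
    fix i assume "i \<in> {..<d}"
    then have "d = (d - Suc i) + Suc i" by simp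
    then have "q ^ d = q ^ (d - Suc i) * q ^ Suc i" by (metis power_add)
    then show "q ^ d - q ^ (d - Suc i) = q ^ d * (1 - (1 / q) ^ Suc i)"
      using assms by (simp add: field_simps)
  qed simp
  also have "\<dots> = q ^ (d * d) * euler_partial (1 / q) d"
    by (simp add: euler_partial_def prod.distrib power_mult)
  finally show ?thesis .
qed

text \<open>A truncation of Euler's pentagonal number theorem.\<close>
lemma euler_partial_ge:
  fixes x :: real
  assumes x: "0 \<le> x" "x \<le> 1"
  shows "1 - x - x\<^sup>2 + x ^ Suc d \<le> euler_partial x d"
proof (induction d)
  case 0
  then show ?case by (simp add: euler_partial_def)
next
  case (Suc d)
  show ?case
  proof (cases d)
    case 0
    then show ?thesis by (simp add: euler_partial_def power2_eq_square)
  next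
    case (Suc d')
    let ?y = "x ^ Suc d"
    have y: "0 \<le> ?y" "0 \<le> 1 - ?y" "?y \<le> x\<^sup>2"
      using x Suc by (auto intro: power_le_one power_decreasing simp flip: power_Suc)
    have "1 - x - x\<^sup>2 + x ^ Suc (Suc d) = (1 - x - x\<^sup>2 + ?y) * (1 - ?y) - ?y * (x\<^sup>2 - ?y)"
      by (simp add: algebra_simps power2_eq_square)
    also have "\<dots> \<le> (1 - x - x\<^sup>2 + ?y) * (1 - ?y)"
      using y by simp
    also have "\<dots> \<le> euler_partial x d * (1 - ?y)"
      using Suc.IH y by (intro mult_right_mono) auto
    also have "\<dots> = euler_partial x (Suc d)"
      by (simp add: euler_partial_def)
    finally show ?thesis .
  qed
qed

lemma euler_partial_gt_quarter:
  fixes q :: real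
  assumes q: "q \<ge> 2"
  shows "1 / 4 < euler_partial (1 / q) d"
proof -
  have x: "0 < 1 / q" "1 / q \<le> 1 / 2" using q by (auto simp: field_simps)
  have "(1 / q)\<^sup>2 \<le> 1 / 4"
    using power_mono[of "1 / q" "1 / 2" 2] x by (simp add: power_divide)
  then have "1 / 4 \<le> 1 - 1 / q - (1 / q)\<^sup>2"
    using x(2) by linarith
  also have "\<dots> < 1 - 1 / q - (1 / q)\<^sup>2 + (1 / q) ^ Suc d"
    using x by simp
  also have "\<dots> \<le> euler_partial (1 / q) d"
    using x by (intro euler_partial_ge) auto
  finally show ?thesis .
qed

lemma euler_partial_ge_of_ge_3:
  fixes q :: real
  assumes q: "q \<ge> 3"
  shows "q\<^sup>2 / (q ^ 3 - q + 1) \<le> euler_partial (1 / q) d"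
proof -
  define c where "c = q ^ 3 - q + 1"
  have "q ^ 1 \<le> q ^ 3" using q by (intro power_increasing) auto
  then have c: "c > 0" unfolding c_def by simp
  have "1 \<le> q\<^sup>2 - 2 * q - 2"
    using mult_nonneg_nonneg[of "q - 3" "q + 1"] q by (simp add: power2_eq_square algebra_simps)
  then have "q ^ 3 \<le> q ^ 3 * (q\<^sup>2 - 2 * q - 2)"
    using q by simp
  moreover have "(q\<^sup>2 - q - 1) * c - q ^ 4 = q ^ 3 * (q\<^sup>2 - 2 * q - 2) + 2 * q\<^sup>2 - 1"
    unfolding c_def by (simp add: algebra_simps power2_eq_square eval_nat_numeral)
  moreover have "0 \<le> q ^ 3" "1 \<le> q\<^sup>2" using q by (auto intro: one_le_power)
  ultimately have "q ^ 4 \<le> (q\<^sup>2 - q - 1) * c" by linarith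
  then have "q\<^sup>2 / c \<le> (q\<^sup>2 - q - 1) / q\<^sup>2"
    using q c by (simp add: pos_divide_le_eq pos_le_divide_eq eval_nat_numeral mult.commute)
  also have "\<dots> = 1 - 1 / q - (1 / q)\<^sup>2"
    using q by (simp add: field_simps power2_eq_square)
  also have "\<dots> \<le> euler_partial (1 / q) d"
  proof -
    have x: "0 \<le> 1 / q" "1 / q \<le> 1" using q by auto
    then have "0 \<le> (1 / q) ^ Suc d" by simp
    then show ?thesis using euler_partial_ge[OF x, of d] by linarith
  qed
  finally show ?thesis unfolding c_def .
qed

lemma card_flats_le:
  assumes "s \<le> k"
  defines "q \<equiv> real CARD('a::{finite,field})"
  shows "real (card (flats k (k - s) :: (nat \<Rightarrow> 'a) set set)) * euler_partial (1 / q) (k - s)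
           \<le> q ^ (s * (k - s) + s)"
proof -
  define d where "d = k - s"
  have k: "k = s + d" and dk: "d \<le> k" using assms(1) unfolding d_def by simp_all
  let ?F = "real (card (flats k d :: (nat \<Rightarrow> 'a) set set))"
  have q1: "q \<ge> 1" unfolding q_def by (simp add: Suc_leI)
  then have q: "q > 0" by simp
  have of_nat_prod_diff: "real (\<Prod>i<d. CARD('a) ^ n - CARD('a) ^ i) = (\<Prod>i<d. q ^ n - q ^ i)"
    if "d \<le> n" for n
    unfolding of_nat_prod q_def
    using that by (intro prod.cong refl) (simp add: of_nat_diff power_increasing)
  have "?F * (q ^ d * (\<Prod>i<d. q ^ d - q ^ i)) \<le> q ^ k * (\<Prod>i<d. q ^ k - q ^ i)"
    using card_flats_mult_le[of k d, where 'a = 'a, THEN of_nat_mono[where 'a = real]]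
    unfolding of_nat_mult of_nat_power of_nat_prod_diff[OF le_refl] of_nat_prod_diff[OF dk]
    by (simp add: q_def)
  also have "\<dots> \<le> q ^ k * (\<Prod>i<d. q ^ k)"
    using q1 k by (intro mult_left_mono prod_mono) (auto intro: power_increasing)
  also have "\<dots> = (q ^ d * q ^ (d * d)) * q ^ (s * d + s)"
    unfolding k by (simp add: algebra_simps flip: power_add power_mult)
  finally have "(q ^ d * q ^ (d * d)) * (?F * euler_partial (1 / q) d)
                  \<le> (q ^ d * q ^ (d * d)) * q ^ (s * d + s)"
    using prod_pow_diff_eq_euler_partial[OF q, of d] by (simp add: algebra_simps)
  then show ?thesis using q unfolding d_def by simp
qed

lemma card_field_ge_2: "CARD('a::{finite,field}) \<ge> 2"
proof -
  have "card {0, 1 :: 'a} \<le> CARD('a)" by (rule card_mono) simp_all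
  then show ?thesis by simp
qed

lemma card_flats_lt_pow:
  assumes "s \<le> k"
  defines "q \<equiv> real CARD('a::{finite,field})"
  shows "real (card (flats k (k - s) :: (nat \<Rightarrow> 'a) set set)) < q ^ (s * (k - s) + s + 2)"
proof -
  have q: "q \<ge> 2" unfolding q_def using card_field_ge_2[where 'a = 'a] by linarith
  then have E: "1 / 4 < euler_partial (1 / q) (k - s)"
    by (rule euler_partial_gt_quarter)
  then have "real (card (flats k (k - s) :: (nat \<Rightarrow> 'a) set set))
               \<le> q ^ (s * (k - s) + s) / euler_partial (1 / q) (k - s)"
    using card_flats_le[OF assms(1), where 'a = 'a] by (simp add: q_def pos_le_divide_eq)
  also have "\<dots> < 4 * q ^ (s * (k - s) + s)"
    using E q by (simp add: field_simps)
  also have "\<dots> \<le> q ^ (s * (k - s) + s + 2)"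
    using q mult_mono[OF q q] by (simp add: power_add power2_eq_square)
  finally show ?thesis .
qed

lemma card_flats_le_pow_of_card_ge_3:
  assumes "s \<le> k" and "CARD('a::{finite,field}) \<ge> 3"
  defines "q \<equiv> real CARD('a)"
  shows "real (card (flats k (k - s) :: (nat \<Rightarrow> 'a) set set))
           \<le> (q ^ 3 - q + 1) / q ^ 4 * q ^ (s * (k - s) + s + 2)"
proof -
  let ?F = "real (card (flats k (k - s) :: (nat \<Rightarrow> 'a) set set))"
  have q: "q \<ge> 3" unfolding q_def using assms(2) by linarith
  have "q ^ 1 \<le> q ^ 3" using q by (intro power_increasing) auto
  then have c: "q ^ 3 - q + 1 > 0" by simp
  have "?F * (q\<^sup>2 / (q ^ 3 - q + 1)) \<le> ?F * euler_partial (1 / q) (k - s)"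
    using euler_partial_ge_of_ge_3[OF q] by (rule mult_left_mono) simp
  also have "\<dots> \<le> q ^ (s * (k - s) + s)"
    using card_flats_le[OF assms(1), where 'a = 'a] by (simp add: q_def)
  finally have "?F \<le> q ^ (s * (k - s) + s) * (q ^ 3 - q + 1) / q\<^sup>2"
    using q c by (simp add: field_simps)
  also have "\<dots> = (q ^ 3 - q + 1) / q ^ 4 * q ^ (s * (k - s) + s + 2)"
    using q by (simp add: power_add field_simps eval_nat_numeral)
  finally show ?thesis .
qed

section \<open>The greedy choice\<close>

lemma double_counting_exists_le:
  fixes miss :: "'f \<Rightarrow> 't \<Rightarrow> bool"
  assumes fin: "finite U" "finite T" and T: "T \<noteq> {}"
    and bound: "\<And>F. F \<in> U \<Longrightarrow> real (card {t \<in> T. miss F t}) \<le> p * real (card T)"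
  shows "\<exists>t\<in>T. real (card {F \<in> U. miss F t}) \<le> p * real (card U)"
proof (rule ccontr)
  assume "\<not> ?thesis"
  then have "(\<Sum>t\<in>T. p * real (card U)) < (\<Sum>t\<in>T. real (card {F \<in> U. miss F t}))"
    using fin T by (intro sum_strict_mono) auto
  also have "\<dots> = (\<Sum>t\<in>T. \<Sum>F\<in>U. of_bool (miss F t))"
    using fin by (simp add: Int_def conj_commute)
  also have "\<dots> = (\<Sum>F\<in>U. real (card {t \<in> T. miss F t}))"
    using fin by (subst sum.swap) (simp add: Int_def conj_commute)
  also have "\<dots> \<le> (\<Sum>F\<in>U. p * real (card T))"
    using bound by (rule sum_mono)
  finally show False by (simp add: mult.commute)
qed

lemma greedy_few_missed:
  fixes miss :: "'f \<Rightarrow> 't \<Rightarrow> bool"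
  assumes fin: "finite U" "finite T" and T: "T \<noteq> {}" and p: "p \<ge> 0"
    and bound: "\<And>F. F \<in> U \<Longrightarrow> real (card {t \<in> T. miss F t}) \<le> p * real (card T)"
  shows "\<exists>ts. length ts = m \<and> set ts \<subseteq> T \<and>
           real (card {F \<in> U. \<forall>t\<in>set ts. miss F t}) \<le> p ^ m * real (card U)"
proof (induction m)
  case 0
  show ?case by simp
next
  case (Suc m)
  then obtain ts where ts: "length ts = m" "set ts \<subseteq> T"
    and missed: "real (card {F \<in> U. \<forall>t\<in>set ts. miss F t}) \<le> p ^ m * real (card U)"
    by blast
  let ?U = "{F \<in> U. \<forall>t\<in>set ts. miss F t}"
  have "finite ?U" using fin(1) by simp
  then have "\<exists>t\<in>T. real (card {F \<in> ?U. miss F t}) \<le> p * real (card ?U)"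
    by (rule double_counting_exists_le[where miss = miss, OF _ fin(2) T]) (simp add: bound)
  then obtain t where t: "t \<in> T" "real (card {F \<in> ?U. miss F t}) \<le> p * real (card ?U)"
    by blast
  have "{F \<in> U. \<forall>t'\<in>set (t # ts). miss F t'} = {F \<in> ?U. miss F t}"
    by auto
  moreover have "p * real (card ?U) \<le> p * (p ^ m * real (card U))"
    using missed p by (rule mult_left_mono)
  ultimately show ?case
    using ts t by (intro exI[of _ "t # ts"]) auto
qed

lemma mult_pow_lt_one_of_lt_powr_log:
  fixes b p y :: real
  assumes "b > 1" "p > 0" "y < b powr (real m * log b (1 / p))"
  shows "p ^ m * y < 1"
proof -
  have "b powr (real m * log b (1 / p)) = b powr (log b ((1 / p) ^ m))"
    using assms by (simp add: log_nat_power)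
  also have "\<dots> = (1 / p) ^ m"
    using assms by simp
  finally have "p ^ m * y < p ^ m * (1 / p) ^ m"
    using assms by (intro mult_strict_left_mono) simp_all
  also have "\<dots> = 1"
    using assms by (simp add: power_one_over)
  finally show ?thesis .
qed

section \<open>Blocking sets\<close>

lemma card_points_missing_flat:
  fixes A :: "(nat \<Rightarrow> 'a::{finite,field}) set"
  assumes A: "A \<in> flats k (k - s)" and s: "s \<le> k"
  defines "q \<equiv> real CARD('a)"
  shows "real (card {t \<in> points k. A \<inter> {t} = {}}) = (1 - 1 / q ^ s) * real (card (points k :: (nat \<Rightarrow> 'a) set))"
proof -
  obtain a v where av: "(a, v) \<in> frames k (k - s)" and A_eq: "A = flat (k - s) (a, v)"
    using A by (rule flats_obtain_frame)
  have q: "q > 0" unfolding q_def by simp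
  have A_sub: "A \<subseteq> points k" and card_A: "card A = CARD('a) ^ (k - s)"
    using frame_spans[OF av] A_eq by simp_all
  have "{t \<in> points k. A \<inter> {t} = {}} = points k - A" by blast
  then have "real (card {t \<in> points k. A \<inter> {t} = {}}) = q ^ k - q ^ (k - s)"
    using A_sub card_A
    by (simp add: card_Diff_subset finite_subset card_points of_nat_diff power_increasing Suc_leI q_def)
  also have "\<dots> = (1 - 1 / q ^ s) * q ^ k"
    using q s by (simp add: field_simps flip: power_add)
  finally show ?thesis by (simp add: card_points q_def)
qed

lemma notin_adjoin_list_of_disjoint:
  assumes V: "lin_subspace V" and disj: "transl a ` V \<inter> adjoin_list {\<lambda>_. 0} us = {}"
  shows "a \<notin> adjoin_list V us"
proof
  assume "a \<in> adjoin_list V us"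
  then obtain x t where "x \<in> V" "t \<in> adjoin_list {\<lambda>_. 0} us" "a = (\<lambda>i. x i + t i)"
    using adjoin_list_decompose by blast
  moreover have "transl a (\<lambda>i. - x i) \<in> transl a ` V"
    using lin_subspace_neg[OF V \<open>x \<in> V\<close>] by blast
  ultimately show False
    using disj by (auto simp: transl_def)
qed

lemma card_lists_missing_flat_le:
  fixes A :: "(nat \<Rightarrow> 'a::{finite,field}) set"
  assumes A: "A \<in> flats k (k - s)" and s: "2 \<le> s" "s \<le> k"
  defines "q \<equiv> real CARD('a)"
  shows "real (card {us \<in> point_lists k s. A \<inter> adjoin_list {\<lambda>_. 0} us = {}})
           \<le> (q ^ 3 - q + 1) / q ^ 4 * real (card (point_lists k s :: (nat \<Rightarrow> 'a) list set))"
proof -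
  obtain a v where av: "(a, v) \<in> frames k (k - s)" and A_eq: "A = flat (k - s) (a, v)"
    using A by (rule flats_obtain_frame)
  define V where "V = lin_span (k - s) v"
  have V: "lin_subspace V" "V \<subseteq> points k" "card V = CARD('a) ^ (k - s)"
    using frame_spans[OF av] lin_subspace_lin_span unfolding V_def by auto
  have a: "a \<in> points k" using av unfolding frames_def by simp
  have "{us \<in> point_lists k s. A \<inter> adjoin_list {\<lambda>_. 0} us = {}}
          \<subseteq> {us \<in> point_lists k s. a \<notin> adjoin_list V us}"
    using notin_adjoin_list_of_disjoint[OF V(1)] unfolding A_eq V_def flat_def by auto
  then have "real (card {us \<in> point_lists k s. A \<inter> adjoin_list {\<lambda>_. 0} us = {}})
               \<le> real (card {us \<in> point_lists k s. a \<notin> adjoin_list V us})"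
    by (simp add: card_mono finite_point_lists)
  also have "\<dots> \<le> (q ^ 3 - q + 1) / q ^ 4 * real (CARD('a) ^ k) ^ s"
  proof (cases "a \<in> V")
    case True
    then have empty: "{us \<in> point_lists k s. a \<notin> adjoin_list V us} = {}"
      using subset_adjoin_list by blast
    have "q ^ 1 \<le> q ^ 3"
      by (rule power_increasing) (simp_all add: q_def Suc_leI)
    then show ?thesis unfolding empty by simp
  next
    case False
    have "real (card {us \<in> point_lists k s. a \<notin> adjoin_list V us})
            \<le> miss_prob q s s * real (CARD('a) ^ k) ^ s"
      using card_avoiding_lists_le[OF V(1,2) a False, of s s] s V(3)
      by (simp add: q_def flip: power_add)
    also have "\<dots> \<le> (q ^ 3 - q + 1) / q ^ 4 * real (CARD('a) ^ k) ^ s"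
      using miss_prob_diag_le[of q s] s by (intro mult_right_mono) (simp_all add: q_def Suc_leI)
    finally show ?thesis .
  qed
  finally show ?thesis by (simp add: card_point_lists)
qed

lemma bq_le_card:
  fixes F :: "'a::{finite,field} itself" and B :: "(nat \<Rightarrow> 'a) set"
  assumes "blocking_set k s B"
  shows "bq F k s \<le> card B"
proof -
  have "finite {card B | B :: (nat \<Rightarrow> 'a) set. blocking_set k s B}"
    by (rule finite_subset[of _ "card ` Pow (points k)"]) (auto simp: blocking_set_def)
  then show ?thesis
    using assms unfolding bq_def by (auto intro: Min_le)
qed

lemma blocking_set_by_greedy:
  fixes blk :: "'t \<Rightarrow> (nat \<Rightarrow> 'a::{finite,field}) set"
  assumes T: "finite T" "T \<noteq> {}" and p: "p \<ge> 0"
    and blk: "\<And>t. t \<in> T \<Longrightarrow> blk t \<subseteq> points k"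
    and miss: "\<And>A. A \<in> flats k (k - s) \<Longrightarrow>
                 real (card {t \<in> T. A \<inter> blk t = {}}) \<le> p * real (card T)"
    and few: "p ^ m * real (card (flats k (k - s) :: (nat \<Rightarrow> 'a) set set)) < 1"
  obtains ts where "length ts = m" "set ts \<subseteq> T" "blocking_set k s (\<Union>t\<in>set ts. blk t)"
proof -
  let ?F = "flats k (k - s) :: (nat \<Rightarrow> 'a) set set"
  obtain ts where ts: "length ts = m" "set ts \<subseteq> T"
    and "real (card {A \<in> ?F. \<forall>t\<in>set ts. A \<inter> blk t = {}}) \<le> p ^ m * real (card ?F)"
    using greedy_few_missed[where U = ?F and miss = "\<lambda>A t. A \<inter> blk t = {}", OF finite_flats T p miss]
    by blast
  with few have "card {A \<in> ?F. \<forall>t\<in>set ts. A \<inter> blk t = {}} = 0"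
    by linarith
  then have none: "{A \<in> ?F. \<forall>t\<in>set ts. A \<inter> blk t = {}} = {}"
    by (simp add: finite_flats)
  have "blocking_set k s (\<Union>t\<in>set ts. blk t)"
    unfolding blocking_set_def
  proof (intro conjI allI impI)
    show "(\<Union>t\<in>set ts. blk t) \<subseteq> points k" using ts(2) blk by blast
  next
    fix A :: "(nat \<Rightarrow> 'a) set" assume "affine_subspace_dim k (k - s) A"
    then have "A \<in> ?F" by (simp add: flats_def)
    then obtain t where "t \<in> set ts" "A \<inter> blk t \<noteq> {}" using none by blast
    then show "(\<Union>t\<in>set ts. blk t) \<inter> A \<noteq> {}" by blast
  qed
  with ts show thesis by (rule that)
qed

lemma bq_le_of_points_greedy:
  fixes F :: "'a::{finite,field} itself"
  assumes s: "s \<le> k"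
    and few: "(1 - 1 / real CARD('a) ^ s) ^ m * real (card (flats k (k - s) :: (nat \<Rightarrow> 'a) set set)) < 1"
  shows "bq F k s \<le> m"
proof -
  have "points k \<noteq> ({} :: (nat \<Rightarrow> 'a) set)"
    using card_points[of k, where 'a = 'a] by auto
  moreover have "0 \<le> 1 - 1 / real CARD('a) ^ s"
    by (simp add: Suc_leI)
  moreover have "{t} \<subseteq> points k" if "t \<in> points k" for t :: "nat \<Rightarrow> 'a"
    using that by simp
  ultimately obtain ts :: "(nat \<Rightarrow> 'a) list" where ts: "length ts = m"
    and B: "blocking_set k s (\<Union>t\<in>set ts. {t})"
    using blocking_set_by_greedy[OF finite_points _ _ _
        card_points_missing_flat[OF _ s, where 'a = 'a, THEN order_eq_refl] few]
    by blast
  have "bq F k s \<le> card (\<Union>t\<in>set ts. {t})"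
    using B by (rule bq_le_card)
  also have "\<dots> \<le> m"
    using ts card_length[of ts] by simp
  finally show ?thesis .
qed

lemma card_Union_adjoin_list_le:
  fixes ts :: "(nat \<Rightarrow> 'a::{finite,field}) list list"
  assumes "\<And>us. us \<in> set ts \<Longrightarrow> length us = s"
  shows "card (\<Union>us\<in>set ts. adjoin_list {\<lambda>_. 0} us) \<le> 1 + length ts * (CARD('a) ^ s - 1)"
proof -
  let ?z = "\<lambda>_. 0 :: 'a"
  have card_each: "card (adjoin_list {?z} us - {?z}) \<le> CARD('a) ^ s - 1" if "us \<in> set ts" for us
    using card_adjoin_list_le[of "{?z}" us] assms[OF that] subset_adjoin_list[of "{?z}" us]
    by (simp add: card_Diff_singleton finite_adjoin_list)
  have "card (\<Union>us\<in>set ts. adjoin_list {?z} us)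
          \<le> card ({?z} \<union> (\<Union>us\<in>set ts. adjoin_list {?z} us - {?z}))"
    by (rule card_mono) (auto simp: finite_adjoin_list)
  also have "\<dots> \<le> 1 + card (\<Union>us\<in>set ts. adjoin_list {?z} us - {?z})"
    by (rule order_trans[OF card_Un_le]) simp
  also have "\<dots> \<le> 1 + (\<Sum>us\<in>set ts. card (adjoin_list {?z} us - {?z}))"
    by (intro add_left_mono card_UN_le) simp
  also have "\<dots> \<le> 1 + card (set ts) * (CARD('a) ^ s - 1)"
    using sum_mono[OF card_each] by simp
  also have "\<dots> \<le> 1 + length ts * (CARD('a) ^ s - 1)"
    by (simp add: card_length)
  finally show ?thesis .
qed

lemma bq_le_of_subspaces_greedy:
  fixes F :: "'a::{finite,field} itself"
  assumes s: "2 \<le> s" "s \<le> k"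
  defines "q \<equiv> real CARD('a)"
  assumes few: "((q ^ 3 - q + 1) / q ^ 4) ^ m * real (card (flats k (k - s) :: (nat \<Rightarrow> 'a) set set)) < 1"
  shows "bq F k s \<le> 1 + m * (CARD('a) ^ s - 1)"
proof -
  have "q ^ 1 \<le> q ^ 3"
    by (rule power_increasing) (simp_all add: q_def Suc_leI)
  then have p: "0 \<le> (q ^ 3 - q + 1) / q ^ 4" by simp
  have "replicate s (\<lambda>_. 0) \<in> (point_lists k s :: (nat \<Rightarrow> 'a) list set)"
    by (auto simp: point_lists_def points_def)
  then have T: "point_lists k s \<noteq> ({} :: (nat \<Rightarrow> 'a) list set)" by blast
  have blk: "adjoin_list {\<lambda>_. 0} us \<subseteq> points k" if "us \<in> point_lists k s" for us :: "(nat \<Rightarrow> 'a) list"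
    using that by (intro adjoin_list_subset_points) (auto simp: point_lists_def points_def)
  obtain ts :: "(nat \<Rightarrow> 'a) list list" where ts: "length ts = m" "set ts \<subseteq> point_lists k s"
    and B: "blocking_set k s (\<Union>us\<in>set ts. adjoin_list {\<lambda>_. 0} us)"
    using blocking_set_by_greedy[OF finite_point_lists T p blk
        card_lists_missing_flat_le[OF _ s, where 'a = 'a, folded q_def] few]
    by blast
  have "bq F k s \<le> card (\<Union>us\<in>set ts. adjoin_list {\<lambda>_. 0} us)"
    using B by (rule bq_le_card)
  also have "\<dots> \<le> 1 + m * (CARD('a) ^ s - 1)"
    using ts card_Union_adjoin_list_le[of ts s] by (simp add: point_lists_def subset_iff)
  finally show ?thesis .
qed

lemma bq_le_by_points:
  fixes F :: "'a::{finite,field} itself"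
  assumes s: "1 \<le> s" "s \<le> k"
  defines "q \<equiv> real CARD('a)"
  shows "real (bq F k s) \<le> real (s * (k - s) + s + 2) / log q (q ^ s / (q ^ s - 1)) + 1"
proof -
  define X where "X = real (s * (k - s) + s + 2)"
  define L where "L = log q (q ^ s / (q ^ s - 1))"
  define m where "m = nat \<lceil>X / L\<rceil>"
  have q: "q > 1" unfolding q_def using card_field_ge_2[where 'a = 'a] by linarith
  then have "q ^ s > 1" using s by (simp add: one_less_power)
  then have p: "0 < 1 - 1 / q ^ s" "1 / (1 - 1 / q ^ s) = q ^ s / (q ^ s - 1)"
    using q by (simp_all add: field_simps)
  have "1 < q ^ s / (q ^ s - 1)"
    using \<open>q ^ s > 1\<close> by (simp add: less_divide_eq_1_pos)
  with q have L: "L > 0" unfolding L_def by simp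
  have "real m = of_int \<lceil>X / L\<rceil>"
    unfolding m_def X_def using L by simp
  then have m: "X / L \<le> real m" "real m \<le> X / L + 1"
    using le_of_int_ceiling[of "X / L"] of_int_ceiling_le_add_one[of "X / L"] by linarith+
  have "real (card (flats k (k - s) :: (nat \<Rightarrow> 'a) set set)) < q ^ (s * (k - s) + s + 2)"
    using card_flats_lt_pow[OF s(2), where 'a = 'a] by (simp add: q_def)
  also have "\<dots> = q powr X"
    unfolding X_def using q by (intro powr_realpow[symmetric]) simp
  also have "\<dots> \<le> q powr (real m * L)"
    using q m(1) L by (simp add: pos_divide_le_eq)
  finally have "bq F k s \<le> m"
    using mult_pow_lt_one_of_lt_powr_log[OF q p(1)] p(2)
    by (intro bq_le_of_points_greedy[OF s(2)]) (simp add: L_def q_def)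
  then show ?thesis
    using m(2) unfolding X_def L_def by simp
qed

lemma bq_le_by_subspaces:
  fixes F :: "'a::{finite,field} itself"
  assumes q3: "CARD('a) \<ge> 3" and s: "2 \<le> s" "s \<le> k"
  defines "q \<equiv> real CARD('a)"
  shows "real (bq F k s)
           \<le> (q ^ s - 1) * real (s * (k - s) + s + 2) / log q (q ^ 4 / (q ^ 3 - q + 1)) + 1"
proof -
  define X where "X = real (s * (k - s) + s + 2)"
  define c where "c = q ^ 3 - q + 1"
  define L where "L = log q (q ^ 4 / c)"
  define m where "m = nat \<lfloor>X / L\<rfloor>"
  have q: "q > 1" unfolding q_def using q3 by linarith
  have "q ^ 4 - c = (q - 1) * (q ^ 3 + 1)"
    unfolding c_def by (simp add: algebra_simps eval_nat_numeral)
  moreover have "(q - 1) * (q ^ 3 + 1) > 0" using q by (simp add: add_pos_pos)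
  moreover have "q ^ 1 \<le> q ^ 3" using q by (intro power_increasing) auto
  ultimately have c: "0 < c" "c < q ^ 4" unfolding c_def by auto
  then have L: "L > 0" unfolding L_def using q by simp
  have "real m = of_int \<lfloor>X / L\<rfloor>"
    unfolding m_def X_def using L by simp
  then have m: "real m \<le> X / L" "X / L < real m + 1"
    by linarith+
  have "real (card (flats k (k - s) :: (nat \<Rightarrow> 'a) set set)) \<le> c / q ^ 4 * q ^ (s * (k - s) + s + 2)"
    using card_flats_le_pow_of_card_ge_3[OF s(2) q3] by (simp add: q_def c_def)
  also have "\<dots> = q powr (X - L)"
  proof -
    have "q powr X = q ^ (s * (k - s) + s + 2)"
      unfolding X_def using q by (intro powr_realpow) simp
    moreover have "q powr L = q ^ 4 / c"
      unfolding L_def using q c by simp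
    ultimately show ?thesis by (simp add: powr_diff)
  qed
  also have "\<dots> < q powr (real m * L)"
    using q m(2) L by (simp add: field_simps)
  finally have "bq F k s \<le> 1 + m * (CARD('a) ^ s - 1)"
    using mult_pow_lt_one_of_lt_powr_log[of q "c / q ^ 4"] q c
    by (intro bq_le_of_subspaces_greedy[OF s]) (simp add: L_def c_def q_def)
  then have "real (bq F k s) \<le> real (1 + m * (CARD('a) ^ s - 1))"
    by (simp only: of_nat_le_iff)
  also have "\<dots> = 1 + real m * (q ^ s - 1)"
    using one_le_power[of "CARD('a)" s] by (simp add: q_def of_nat_diff Suc_leI)
  also have "\<dots> \<le> 1 + X / L * (q ^ s - 1)"
    using m(1) q by (intro add_left_mono mult_right_mono) simp_all
  finally show ?thesis
    unfolding X_def L_def c_def by (simp add: algebra_simps)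
qed

theorem theorem1p1:
  fixes s k :: nat and F :: "'a::{finite,field} itself"
  assumes "2 \<le> s" and "s \<le> k"
  defines "q \<equiv> real CARD('a)"
  shows "(CARD('a) = 2 \<longrightarrow>
           real (bq F k s)
             \<le> real (s * (k - s) + s + 2) / log q (q ^ s / (q ^ s - 1)) + 1)
       \<and> (CARD('a) \<ge> 3 \<longrightarrow>
           real (bq F k s)
             \<le> (q ^ s - 1) * real (s * (k - s) + s + 2)
                  / log q (q ^ 4 / (q ^ 3 - q + 1)) + 1)"
  unfolding q_def using assms
  by (intro conjI impI bq_le_by_points bq_le_by_subspaces) auto

end
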